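(* Under the setting in the context, the matrices $Q_\beta$, $V_\beta$, $K_\beta$ satisfy $$\det(I-t\,V_\beta)=\det(I-t\,Q_\beta)\,\det(I-t\,K_\beta).$$
   Context: Setting. Let $I\subset\mathbb{R}$ be a compact interval and $f_i(x)=\rho_ix+\varrho_i$ ($i=1,\dots,n$), $0<|\rho_i|<1$, an IFS with the open set condition. Assume $I$ is the union of a nonempty open interval $I_h$ (the hole) and $f_1(I),\dots,f_n(I)$, with pairwise disjoint interiors and $I_h$ disjoint from the $f_i(I)$. Let $F(x)=f_i^{-1}(x)$ on $f_i(I)$. The laps $I_1,\dots,I_n$ (the $f_i(I)$ in left-to-right order) and the hole have endpoints $a_1<\dots<a_{n+2}$, hole $=(a_h,a_{h+1})$; interior endpoints are the turning/discontinuity points. Assume the forward orbit of every one-sided endpoint $a_i^\pm$ is finite (periodic, eventually periodic, or falling into the hole). Markov partition and $Q_\beta$: the points of these orbits together with the $a_i$, ordered, cut $I$ into intervals $J_1,\dots,J_m$; $A=[a_{ij}]$, $a_{ij}=1$ iff $F(\mathrm{int}J_j)\supseteq\mathrm{int}J_i$; $Q_\beta=[a_{ij}|F'|_{J_j}|^{-\beta}]$, $\beta\in\mathbb{R}$. Points $y^{(i)}$: list, ordered along $I$, the one-sided endpoints $a_1^+,a_2^-,a_2^+,\dots,a_{n+1}^-,a_{n+1}^+,a_{n+2}^-$ (each $a_i^-,a_i^+$ as two consecutive entries, $a_i^-$ first) together with all other points of the forward orbits of these one-sided endpoints; call them $y^{(1)},\dots,y^{(q)}$ and identify $y^{(i)}$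 with the $i$-th standard basis vector of $\mathbb{R}^q$. $V_\beta=[v_{ij}]$ ($q\times q$): for each $j$, if $F(y^{(j)})=y^{(i)}$ put $v_{ij}=\varepsilon(y^{(j)})|F'(y^{(j)})|^{-\beta}$, $\varepsilon$ the sign of $F'$ at $y^{(j)}$ (the column is zero if $y^{(j)}$ is a limit from inside the hole). Further, for every pair of consecutive entries that are the two one-sided versions of a turning/discontinuity point lying between $y^{(j)}$ and $y^{(i)}$: if $y^{(i)}>y^{(j)}$ and the pair is $y^{(k)},y^{(k+1)}$ with $j\le k<i$, put $v_{kj}=v_{ij}$, $v_{k+1,j}=-v_{ij}$; if $y^{(i)}<y^{(j)}$ and the pair is $y^{(k-1)},y^{(k)}$ with $i<k\le j$, put $v_{k-1,j}=-v_{ij}$, $v_{kj}=v_{ij}$. All other entries are $0$. $K_\beta$ is the $n\times n$ diagonal matrix with $k_{ii}=\varepsilon(I_i)|F'|_{I_i}|^{-\beta}$, $\varepsilon(I_i)$ the sign of $F'$ on lap $I_i$. *)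

theory Defs
  imports "HOL-Analysis.Analysis" "Jordan_Normal_Form.Determinant"
begin

(* The interval I = [a 1, a (n+2)]; endpoints a 1 < ... < a (n+2) (1-based);
   hole = (a h, a (h+1)).  One-sided points are pairs (x, s) with
   s = True meaning x^+ (limit from the right), s = False meaning x^-. *)

definition ifs :: "(nat \<Rightarrow> real) \<Rightarrow> (nat \<Rightarrow> real) \<Rightarrow> nat \<Rightarrow> real \<Rightarrow> real" where
  "ifs rho vr i x = rho i * x + vr i"

definition Ival :: "nat \<Rightarrow> (nat \<Rightarrow> real) \<Rightarrow> real set" where
  "Ival n a = {a 1 .. a (n+2)}"

definition side_in :: "real set \<Rightarrow> real \<Rightarrow> bool \<Rightarrow> bool" where
  "side_in S x s = (\<exists>\<delta>>0. (if s then {x .. x + \<delta>} else {x - \<delta> .. x}) \<subseteq> S)"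

definition has_lap :: "nat \<Rightarrow> (nat \<Rightarrow> real) \<Rightarrow> (nat \<Rightarrow> real) \<Rightarrow> (nat \<Rightarrow> real) \<Rightarrow> real \<times> bool \<Rightarrow> bool" where
  "has_lap n rho vr a p = (\<exists>i\<in>{1..n}. side_in (ifs rho vr i ` Ival n a) (fst p) (snd p))"

definition lap_of :: "nat \<Rightarrow> (nat \<Rightarrow> real) \<Rightarrow> (nat \<Rightarrow> real) \<Rightarrow> (nat \<Rightarrow> real) \<Rightarrow> real \<times> bool \<Rightarrow> nat" where
  "lap_of n rho vr a p = (THE i. i \<in> {1..n} \<and> side_in (ifs rho vr i ` Ival n a) (fst p) (snd p))"

text \<open>F = f_i^{-1} applied to a one-sided point; the side flips when F is decreasing.
  None if the one-sided point is not in a lap (limit from inside the hole, point of the hole).\<close>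
definition Fpt :: "nat \<Rightarrow> (nat \<Rightarrow> real) \<Rightarrow> (nat \<Rightarrow> real) \<Rightarrow> (nat \<Rightarrow> real) \<Rightarrow> real \<times> bool \<Rightarrow> (real \<times> bool) option" where
  "Fpt n rho vr a p =
     (if has_lap n rho vr a p then
        (let i = lap_of n rho vr a p in
           Some ((fst p - vr i) / rho i, if rho i > 0 then snd p else \<not> snd p))
      else None)"

definition Fderiv_pt :: "nat \<Rightarrow> (nat \<Rightarrow> real) \<Rightarrow> (nat \<Rightarrow> real) \<Rightarrow> (nat \<Rightarrow> real) \<Rightarrow> real \<times> bool \<Rightarrow> real" where
  "Fderiv_pt n rho vr a p = 1 / rho (lap_of n rho vr a p)"

text \<open>Points other than the a_k are ordinary (two-sided) points; we represent them with side True.\<close>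
definition canon :: "nat \<Rightarrow> (nat \<Rightarrow> real) \<Rightarrow> real \<times> bool \<Rightarrow> real \<times> bool" where
  "canon n a p = (if fst p \<in> a ` {1..n+2} then p else (fst p, True))"

definition init_pts :: "nat \<Rightarrow> (nat \<Rightarrow> real) \<Rightarrow> (real \<times> bool) set" where
  "init_pts n a = {(a k, True) | k. k \<in> {1..n+1}} \<union> {(a k, False) | k. k \<in> {2..n+2}}"

definition step_rel :: "nat \<Rightarrow> (nat \<Rightarrow> real) \<Rightarrow> (nat \<Rightarrow> real) \<Rightarrow> (nat \<Rightarrow> real) \<Rightarrow> ((real \<times> bool) \<times> (real \<times> bool)) set" where
  "step_rel n rho vr a = {(p, canon n a q) | p q. Fpt n rho vr a p = Some q}"

definition orbit :: "nat \<Rightarrow> (nat \<Rightarrow> real) \<Rightarrow> (nat \<Rightarrow> real) \<Rightarrow> (nat \<Rightarrow> real) \<Rightarrow> real \<times> bool \<Rightarrow> (real \<times> bool) set" where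
  "orbit n rho vr a p0 = {p. (p0, p) \<in> (step_rel n rho vr a)\<^sup>*}"

definition Ypts :: "nat \<Rightarrow> (nat \<Rightarrow> real) \<Rightarrow> (nat \<Rightarrow> real) \<Rightarrow> (nat \<Rightarrow> real) \<Rightarrow> (real \<times> bool) set" where
  "Ypts n rho vr a = (\<Union>p0\<in>init_pts n a. orbit n rho vr a p0)"

definition pt_less :: "real \<times> bool \<Rightarrow> real \<times> bool \<Rightarrow> bool" where
  "pt_less p r = (fst p < fst r \<or> (fst p = fst r \<and> \<not> snd p \<and> snd r))"

definition pt_le :: "real \<times> bool \<Rightarrow> real \<times> bool \<Rightarrow> bool" where
  "pt_le p r = (p = r \<or> pt_less p r)"

definition nth_pt :: "(real \<times> bool) set \<Rightarrow> nat \<Rightarrow> real \<times> bool" where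
  "nth_pt Y k = (THE p. p \<in> Y \<and> card {r \<in> Y. pt_less r p} = k)"

definition turning :: "nat \<Rightarrow> (nat \<Rightarrow> real) \<Rightarrow> real set" where
  "turning n a = a ` {2..n+1}"

text \<open>Entry of V_beta in the row of point r and the column of point p (additive reading).\<close>
definition V_entry :: "nat \<Rightarrow> (nat \<Rightarrow> real) \<Rightarrow> (nat \<Rightarrow> real) \<Rightarrow> (nat \<Rightarrow> real) \<Rightarrow> real \<Rightarrow>
    real \<times> bool \<Rightarrow> real \<times> bool \<Rightarrow> real" where
  "V_entry n rho vr a \<beta> r p =
     (case Fpt n rho vr a p of
        None \<Rightarrow> 0
      | Some q0 \<Rightarrow>
          (let q = canon n a q0;
               d = Fderiv_pt n rho vr a p;
               v = sgn d * \<bar>d\<bar> powr (- \<beta>);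
               inside = (\<lambda>x. if pt_less p q then pt_le p x \<and> pt_le x q else pt_le q x \<and> pt_le x p)
           in (if r = q then v else 0)
              + (if fst r \<in> turning n a \<and> inside (fst r, False) \<and> inside (fst r, True)
                 then (if snd r then -1 else 1) * (if pt_less p q then v else - v)
                 else 0)))"

definition Vmat :: "nat \<Rightarrow> (nat \<Rightarrow> real) \<Rightarrow> (nat \<Rightarrow> real) \<Rightarrow> (nat \<Rightarrow> real) \<Rightarrow> real \<Rightarrow> real mat" where
  "Vmat n rho vr a \<beta> =
     (let Y = Ypts n rho vr a
      in mat (card Y) (card Y) (\<lambda>(i, j). V_entry n rho vr a \<beta> (nth_pt Y i) (nth_pt Y j)))"

definition part_pts :: "nat \<Rightarrow> (nat \<Rightarrow> real) \<Rightarrow> (nat \<Rightarrow> real) \<Rightarrow> (nat \<Rightarrow> real) \<Rightarrow> real set" where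
  "part_pts n rho vr a = fst ` Ypts n rho vr a \<union> a ` {1..n+2}"

definition nth_real :: "real set \<Rightarrow> nat \<Rightarrow> real" where
  "nth_real P k = (THE x. x \<in> P \<and> card {y \<in> P. y < x} = k)"

definition F_img :: "nat \<Rightarrow> (nat \<Rightarrow> real) \<Rightarrow> (nat \<Rightarrow> real) \<Rightarrow> (nat \<Rightarrow> real) \<Rightarrow> real set \<Rightarrow> real set" where
  "F_img n rho vr a S =
     {y. \<exists>x\<in>S. \<exists>i\<in>{1..n}. x \<in> interior (ifs rho vr i ` Ival n a) \<and> y = (x - vr i) / rho i}"

definition lap_of_set :: "nat \<Rightarrow> (nat \<Rightarrow> real) \<Rightarrow> (nat \<Rightarrow> real) \<Rightarrow> (nat \<Rightarrow> real) \<Rightarrow> real set \<Rightarrow> nat" where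
  "lap_of_set n rho vr a S = (THE i. i \<in> {1..n} \<and> S \<subseteq> ifs rho vr i ` Ival n a)"

text \<open>Q_beta, indexed 0-based by the intervals J_j = [p_j, p_{j+1}] of the Markov partition.\<close>
definition Qmat :: "nat \<Rightarrow> (nat \<Rightarrow> real) \<Rightarrow> (nat \<Rightarrow> real) \<Rightarrow> (nat \<Rightarrow> real) \<Rightarrow> real \<Rightarrow> real mat" where
  "Qmat n rho vr a \<beta> =
     (let P = part_pts n rho vr a;
          m = card P - 1;
          intJ = (\<lambda>j. {nth_real P j <..< nth_real P (Suc j)})
      in mat m m (\<lambda>(i, j).
           (if intJ i \<subseteq> F_img n rho vr a (intJ j) then 1 else 0)
           * \<bar>1 / rho (lap_of_set n rho vr a (intJ j))\<bar> powr (- \<beta>)))"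

text \<open>k-th lap (0-based, left to right) is [a k', a (k'+1)], skipping the hole index h.\<close>
definition lap_left :: "nat \<Rightarrow> nat \<Rightarrow> nat" where
  "lap_left h k = (if Suc k < h then Suc k else Suc (Suc k))"

definition lap_ifs :: "nat \<Rightarrow> (nat \<Rightarrow> real) \<Rightarrow> (nat \<Rightarrow> real) \<Rightarrow> (nat \<Rightarrow> real) \<Rightarrow> nat \<Rightarrow> nat \<Rightarrow> nat" where
  "lap_ifs n rho vr a h k =
     (THE i. i \<in> {1..n} \<and> ifs rho vr i ` Ival n a = {a (lap_left h k) .. a (Suc (lap_left h k))})"

definition Kmat :: "nat \<Rightarrow> (nat \<Rightarrow> real) \<Rightarrow> (nat \<Rightarrow> real) \<Rightarrow> (nat \<Rightarrow> real) \<Rightarrow> nat \<Rightarrow> real \<Rightarrow> real mat" where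
  "Kmat n rho vr a h \<beta> =
     mat n n (\<lambda>(i, j). if i = j then
        (let d = 1 / rho (lap_ifs n rho vr a h i) in sgn d * \<bar>d\<bar> powr (- \<beta>))
      else 0)"

end

theory Submission
  imports Defs
begin

(* Every branch of F maps its lap affinely onto the whole interval I, so F sends each one-sided
   endpoint a_k^+- to a_1^+ or to a_{n+2}^-. Hence the points y^(i) are exactly the 2n+2 one-sided
   endpoints, the Markov partition consists of the n laps and the hole, and Q_beta has constant
   columns: column j is |F'|_{J_j}|^(-beta), or 0 for the hole. List the y^(i) as
   a_1^+, a_2^-, a_2^+, ..., a_{n+2}^-, so that entries 2k and 2k+1 are the ends of the k-th interval.
   The sum of these two rows of V_beta vanishes outside the two columns of the same interval, where
   it equals the k-th diagonal entry of K_beta (0 for the hole); and in the row of a left-hand limit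
   the difference of the two columns of the j-th interval is the j-th column of Q_beta. The
   corresponding change of basis makes I - t V_beta block upper triangular with diagonal blocks
   I - t Q_beta and I - t K_beta, the latter padded by a 1 for the hole. *)

section \<open>Block reduction of determinants\<close>

lemma det_one_minus_diagonal:
  fixes d :: "nat \<Rightarrow> 'a::idom"
  shows "det (1\<^sub>m m - t \<cdot>\<^sub>m mat m m (\<lambda>(i, j). if i = j then d i else 0)) = (\<Prod>i<m. 1 - t * d i)"
proof -
  let ?A = "1\<^sub>m m - t \<cdot>\<^sub>m mat m m (\<lambda>(i, j). if i = j then d i else 0)"
  have A: "?A \<in> carrier_mat m m" by auto
  have "upper_triangular ?A" by (rule upper_triangularI) auto
  then have "det ?A = prod_list (diag_mat ?A)" by (rule det_upper_triangular[OF _ A])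
  also have "diag_mat ?A = map (\<lambda>i. 1 - t * d i) [0..<m]" by (auto simp: diag_mat_def)
  finally show ?thesis by (simp add: prod.distinct_set_conv_list[symmetric] atLeast0LessThan)
qed

lemma det_one_minus_four_block_lower_left_zero:
  fixes Q :: "'a::idom mat"
  assumes Q: "Q \<in> carrier_mat m m" and B: "B \<in> carrier_mat m k" and D: "D \<in> carrier_mat k k"
  shows "det (1\<^sub>m (m + k) - t \<cdot>\<^sub>m four_block_mat Q B (0\<^sub>m k m) D)
       = det (1\<^sub>m m - t \<cdot>\<^sub>m Q) * det (1\<^sub>m k - t \<cdot>\<^sub>m D)"
proof -
  have "1\<^sub>m (m + k) - t \<cdot>\<^sub>m four_block_mat Q B (0\<^sub>m k m) D
      = four_block_mat (1\<^sub>m m - t \<cdot>\<^sub>m Q) (- (t \<cdot>\<^sub>m B)) (0\<^sub>m k m) (1\<^sub>m k - t \<cdot>\<^sub>m D)"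
  proof (rule eq_matI)
    fix i j assume "i < dim_row (four_block_mat (1\<^sub>m m - t \<cdot>\<^sub>m Q) (- (t \<cdot>\<^sub>m B)) (0\<^sub>m k m) (1\<^sub>m k - t \<cdot>\<^sub>m D))"
      and "j < dim_col (four_block_mat (1\<^sub>m m - t \<cdot>\<^sub>m Q) (- (t \<cdot>\<^sub>m B)) (0\<^sub>m k m) (1\<^sub>m k - t \<cdot>\<^sub>m D))"
    then have i: "i < m + k" and j: "j < m + k" using Q D by simp_all
    show "(1\<^sub>m (m + k) - t \<cdot>\<^sub>m four_block_mat Q B (0\<^sub>m k m) D) $$ (i, j) =
        four_block_mat (1\<^sub>m m - t \<cdot>\<^sub>m Q) (- (t \<cdot>\<^sub>m B)) (0\<^sub>m k m) (1\<^sub>m k - t \<cdot>\<^sub>m D) $$ (i, j)"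
      using Q B D i j by (cases "i < m"; cases "j < m") auto
  qed (use Q D in simp_all)
  also have "det \<dots> = det (1\<^sub>m m - t \<cdot>\<^sub>m Q) * det (1\<^sub>m k - t \<cdot>\<^sub>m D)"
    using minus_carrier_mat[OF smult_carrier_mat[OF Q]] minus_carrier_mat[OF smult_carrier_mat[OF D]] B
    by (intro det_four_block_mat_lower_left_zero) simp_all
  finally show ?thesis .
qed

definition pair_basis :: "nat \<Rightarrow> 'a::idom mat" where
  "pair_basis m = mat (2*m) (2*m) (\<lambda>(r, j).
     if j < m then (if r = 2*j+1 then 1 else 0) - (if r = 2*j then 1 else 0)
     else if r = 2*(j-m) then 1 else 0)"

definition pair_basis_inv :: "nat \<Rightarrow> 'a::idom mat" where
  "pair_basis_inv m = mat (2*m) (2*m) (\<lambda>(i, r).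
     if i < m then (if r = 2*i+1 then 1 else 0) else if r div 2 = i - m then 1 else 0)"

lemma pair_basis_dim [simp]:
  "dim_row (pair_basis m) = 2*m" "dim_col (pair_basis m) = 2*m"
  "dim_row (pair_basis_inv m) = 2*m" "dim_col (pair_basis_inv m) = 2*m"
  by (simp_all add: pair_basis_def pair_basis_inv_def)

lemma pair_basis_carrier [simp]: "pair_basis m \<in> carrier_mat (2*m) (2*m)"
  by (simp add: pair_basis_def)

lemma pair_basis_inv_carrier [simp]: "pair_basis_inv m \<in> carrier_mat (2*m) (2*m)"
  by (simp add: pair_basis_inv_def)

lemma sum_lessThan_mult_delta:
  fixes f :: "nat \<Rightarrow> 'a::semiring_1"
  assumes "a < N"
  shows "(\<Sum>l<N. f l * (if l = a then 1 else 0)) = f a"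
proof -
  have "(\<Sum>l<N. f l * (if l = a then 1 else 0)) = (\<Sum>l<N. if l = a then f a else 0)"
    by (rule sum.cong) auto
  then show ?thesis using assms by simp
qed

lemma index_mult_mat_sum:
  assumes "A \<in> carrier_mat nr k" "B \<in> carrier_mat k nc" "i < nr" "j < nc"
  shows "(A * B) $$ (i, j) = (\<Sum>l<k. A $$ (i, l) * B $$ (l, j))"
  using assms by (simp add: scalar_prod_def lessThan_atLeast0)

lemma mult_pair_basis_index:
  fixes X :: "'a::idom mat"
  assumes X: "X \<in> carrier_mat nr (2*m)" and r: "r < nr" and j: "j < 2*m"
  shows "(X * pair_basis m) $$ (r, j) =
    (if j < m then X $$ (r, 2*j+1) - X $$ (r, 2*j) else X $$ (r, 2*(j-m)))"
proof (cases "j < m")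
  case True
  have "(X * pair_basis m) $$ (r, j) = (\<Sum>l<2*m. X $$ (r, l) * pair_basis m $$ (l, j))"
    by (rule index_mult_mat_sum[OF X pair_basis_carrier r j])
  also have "\<dots> = (\<Sum>l<2*m. X $$ (r, l) * (if l = 2*j+1 then 1 else 0))
      - (\<Sum>l<2*m. X $$ (r, l) * (if l = 2*j then 1 else 0))"
    unfolding sum_subtractf[symmetric]
    by (rule sum.cong) (use True in \<open>auto simp: pair_basis_def right_diff_distrib\<close>)
  also have "\<dots> = X $$ (r, 2*j+1) - X $$ (r, 2*j)"
    using True by (simp add: sum_lessThan_mult_delta)
  finally show ?thesis using True by simp
next
  case False
  have "(X * pair_basis m) $$ (r, j) = (\<Sum>l<2*m. X $$ (r, l) * pair_basis m $$ (l, j))"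
    by (rule index_mult_mat_sum[OF X pair_basis_carrier r j])
  also have "\<dots> = (\<Sum>l<2*m. X $$ (r, l) * (if l = 2*(j-m) then 1 else 0))"
    by (rule sum.cong) (use False j in \<open>auto simp: pair_basis_def\<close>)
  also have "\<dots> = X $$ (r, 2*(j-m))"
    using False j by (intro sum_lessThan_mult_delta) simp
  finally show ?thesis using False by simp
qed

lemma pair_basis_inv_mult_index:
  fixes X :: "'a::idom mat"
  assumes X: "X \<in> carrier_mat (2*m) nc" and i: "i < 2*m" and c: "c < nc"
  shows "(pair_basis_inv m * X) $$ (i, c) =
    (if i < m then X $$ (2*i+1, c) else X $$ (2*(i-m), c) + X $$ (2*(i-m)+1, c))"
proof (cases "i < m")
  case True
  have "(pair_basis_inv m * X) $$ (i, c) = (\<Sum>l<2*m. pair_basis_inv m $$ (i, l) * X $$ (l, c))"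
    by (rule index_mult_mat_sum[OF pair_basis_inv_carrier X i c])
  also have "\<dots> = (\<Sum>l<2*m. X $$ (l, c) * (if l = 2*i+1 then 1 else 0))"
    by (rule sum.cong) (use True in \<open>auto simp: pair_basis_inv_def\<close>)
  also have "\<dots> = X $$ (2*i+1, c)"
    using True by (intro sum_lessThan_mult_delta) simp
  finally show ?thesis using True by simp
next
  case False
  have "(pair_basis_inv m * X) $$ (i, c) = (\<Sum>l<2*m. pair_basis_inv m $$ (i, l) * X $$ (l, c))"
    by (rule index_mult_mat_sum[OF pair_basis_inv_carrier X i c])
  also have "\<dots> = (\<Sum>l\<in>{l \<in> {..<2*m}. l div 2 = i - m}. X $$ (l, c))"
    unfolding sum.inter_filter[OF finite_lessThan]
    by (rule sum.cong) (use False i in \<open>auto simp: pair_basis_inv_def\<close>)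
  also have "{l \<in> {..<2*m}. l div 2 = i - m} = {2*(i-m), 2*(i-m)+1}"
    using False i by auto
  finally show ?thesis using False by simp
qed

lemma pair_basis_inv_mult_pair_basis: "pair_basis_inv m * pair_basis m = (1\<^sub>m (2*m) :: 'a::idom mat)"
proof (rule eq_matI)
  fix i j assume "i < dim_row (1\<^sub>m (2*m) :: 'a mat)" "j < dim_col (1\<^sub>m (2*m) :: 'a mat)"
  then have i: "i < 2*m" and j: "j < 2*m" by simp_all
  have parity: "Suc (2*x) \<noteq> 2*y" "2*y \<noteq> Suc (2*x)" for x y :: nat by presburger+
  have "(pair_basis_inv m * pair_basis m) $$ (i, j) = (if i < m then pair_basis m $$ (2*i+1, j)
      else pair_basis m $$ (2*(i-m), j) + pair_basis m $$ (2*(i-m)+1, j))"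
    by (rule pair_basis_inv_mult_index[OF pair_basis_carrier i j])
  also have "\<dots> = (1\<^sub>m (2*m) :: 'a mat) $$ (i, j)"
  proof (cases "i < m")
    case True
    then show ?thesis using i j parity by (simp add: pair_basis_def)
  next
    case False
    have "2*(i-m) = 2*(j-m) \<longleftrightarrow> i = j" if "\<not> j < m" using False that by auto
    then show ?thesis using False i j parity by (simp add: pair_basis_def)
  qed
  finally show "(pair_basis_inv m * pair_basis m) $$ (i, j) = (1\<^sub>m (2*m) :: 'a mat) $$ (i, j)" .
qed simp_all

lemma pair_basis_conj_index:
  fixes X :: "'a::idom mat"
  assumes X: "X \<in> carrier_mat (2*m) (2*m)" and i: "i < 2*m" and j: "j < 2*m"
  shows "(pair_basis_inv m * X * pair_basis m) $$ (i, j) =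
    (let R = (\<lambda>c. if i < m then X $$ (2*i+1, c) else X $$ (2*(i-m), c) + X $$ (2*(i-m)+1, c))
     in if j < m then R (2*j+1) - R (2*j) else R (2*(j-m)))"
proof -
  have TX: "pair_basis_inv m * X \<in> carrier_mat (2*m) (2*m)"
    using pair_basis_inv_carrier X by (rule mult_carrier_mat)
  have TX_index: "(pair_basis_inv m * X) $$ (i, c) =
      (if i < m then X $$ (2*i+1, c) else X $$ (2*(i-m), c) + X $$ (2*(i-m)+1, c))" if "c < 2*m" for c
    using X i that by (rule pair_basis_inv_mult_index)
  show ?thesis
    unfolding Let_def mult_pair_basis_index[OF TX i j] using j by (simp add: TX_index)
qed

lemma pair_basis_conj_four_block:
  fixes V :: "'a::idom mat"
  assumes V: "V \<in> carrier_mat (2*m) (2*m)"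
    and pair_sum: "\<And>k c. k < m \<Longrightarrow> c < 2*m \<Longrightarrow>
      V $$ (2*k, c) + V $$ (2*k+1, c) = (if c div 2 = k then d k else 0)"
  shows "pair_basis_inv m * V * pair_basis m =
    four_block_mat (mat m m (\<lambda>(i, j). V $$ (2*i+1, 2*j+1) - V $$ (2*i+1, 2*j)))
      (mat m m (\<lambda>(i, j). V $$ (2*i+1, 2*j))) (0\<^sub>m m m) (mat m m (\<lambda>(i, j). if i = j then d i else 0))"
    (is "_ = ?B")
proof (rule eq_matI)
  fix i j assume "i < dim_row ?B" "j < dim_col ?B"
  then have i: "i < 2*m" and j: "j < 2*m" by simp_all
  show "(pair_basis_inv m * V * pair_basis m) $$ (i, j) = ?B $$ (i, j)"
  proof (cases "i < m")
    case True
    then show ?thesis using i j by (simp add: pair_basis_conj_index[OF V i j])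
  next
    case i_low: False
    define k where "k = i - m"
    have k: "k < m" using i_low i by (simp add: k_def)
    show ?thesis
    proof (cases "j < m")
      case True
      have "(2*j+1) div 2 = j" "(2*j) div 2 = j" by simp_all
      then show ?thesis
        using True i_low i j k pair_sum[of k "2*j+1"] pair_sum[of k "2*j"]
        by (simp add: pair_basis_conj_index[OF V i j] k_def[symmetric])
    next
      case False
      define l where "l = j - m"
      have l: "l < m" using False j by (simp add: l_def)
      show ?thesis using i_low False i j l k pair_sum[of k "2*l"]
        by (simp add: pair_basis_conj_index[OF V i j] k_def[symmetric] l_def[symmetric])
    qed
  qed
qed simp_all

lemma det_one_minus_conj:
  fixes V :: "'a::comm_ring_1 mat"
  assumes T: "T \<in> carrier_mat n n" and S: "S \<in> carrier_mat n n" and V: "V \<in> carrier_mat n n"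
    and inv: "T * S = 1\<^sub>m n"
  shows "det (1\<^sub>m n - t \<cdot>\<^sub>m V) = det (1\<^sub>m n - t \<cdot>\<^sub>m (T * V * S))"
proof -
  let ?W = "1\<^sub>m n - t \<cdot>\<^sub>m V"
  have W: "?W \<in> carrier_mat n n" using V by (intro minus_carrier_mat smult_carrier_mat)
  have "det T * det S = det (T * S)" by (rule det_mult[OF T S, symmetric])
  also have "\<dots> = 1" by (simp add: inv)
  finally have det_inv: "det T * det S = 1" .
  have "det (T * ?W * S) = det ?W * (det T * det S)"
    by (simp only: det_mult[OF mult_carrier_mat[OF T W] S] det_mult[OF T W]) (simp only: mult_ac)
  then have "det ?W = det (T * ?W * S)" by (simp add: det_inv)
  also have "T * ?W * S = (T - t \<cdot>\<^sub>m (T * V)) * S"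
    by (simp add: mult_minus_distrib_mat[OF T one_carrier_mat smult_carrier_mat[OF V]]
        right_mult_one_mat[OF T] mult_smult_distrib[OF T V])
  also have "\<dots> = T * S - t \<cdot>\<^sub>m (T * V * S)"
    using mult_carrier_mat[OF T V]
    by (simp only: minus_mult_distrib_mat[OF T smult_carrier_mat S] mult_smult_assoc_mat[OF _ S])
  also have "\<dots> = 1\<^sub>m n - t \<cdot>\<^sub>m (T * V * S)" by (simp only: inv)
  finally show ?thesis .
qed

(* Conjugation by pair_basis adds up the rows 2k, 2k+1 and takes differences of the columns
   2j, 2j+1; the hypothesis on the row sums makes the lower left block vanish. *)
lemma det_one_minus_pair_reduction:
  fixes V :: "'a::idom mat"
  assumes V: "V \<in> carrier_mat (2*m) (2*m)"
    and pair_sum: "\<And>k c. k < m \<Longrightarrow> c < 2*m \<Longrightarrow>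
      V $$ (2*k, c) + V $$ (2*k+1, c) = (if c div 2 = k then d k else 0)"
  shows "det (1\<^sub>m (2*m) - t \<cdot>\<^sub>m V)
       = det (1\<^sub>m m - t \<cdot>\<^sub>m mat m m (\<lambda>(i, j). V $$ (2*i+1, 2*j+1) - V $$ (2*i+1, 2*j)))
         * (\<Prod>k<m. 1 - t * d k)"
proof -
  have "det (1\<^sub>m (2*m) - t \<cdot>\<^sub>m V) = det (1\<^sub>m (2*m) - t \<cdot>\<^sub>m (pair_basis_inv m * V * pair_basis m))"
    using pair_basis_inv_carrier pair_basis_carrier V pair_basis_inv_mult_pair_basis
    by (rule det_one_minus_conj)
  also have "\<dots> = det (1\<^sub>m (m+m) - t \<cdot>\<^sub>m
      four_block_mat (mat m m (\<lambda>(i, j). V $$ (2*i+1, 2*j+1) - V $$ (2*i+1, 2*j)))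
        (mat m m (\<lambda>(i, j). V $$ (2*i+1, 2*j))) (0\<^sub>m m m) (mat m m (\<lambda>(i, j). if i = j then d i else 0)))"
    by (simp only: pair_basis_conj_four_block[OF V pair_sum] mult_2[of m])
  also have "\<dots> = det (1\<^sub>m m - t \<cdot>\<^sub>m mat m m (\<lambda>(i, j). V $$ (2*i+1, 2*j+1) - V $$ (2*i+1, 2*j)))
      * det (1\<^sub>m m - t \<cdot>\<^sub>m mat m m (\<lambda>(i, j). if i = j then d i else 0))"
    by (rule det_one_minus_four_block_lower_left_zero) auto
  finally show ?thesis by (simp only: det_one_minus_diagonal)
qed

section \<open>One-sided endpoints\<close>

(* The c-th entry of the list a_1^+, a_2^-, a_2^+, ..., a_{n+2}^- (True marks a right-hand limit),
   so that entries 2s and 2s+1 are the two ends of the interval [a_{s+1}, a_{s+2}]. *)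
definition endpoint :: "(nat \<Rightarrow> real) \<Rightarrow> nat \<Rightarrow> real \<times> bool" where
  "endpoint a c = (if even c then (a (c div 2 + 1), True) else (a (c div 2 + 2), False))"

lemma side_in_Icc:
  assumes "l < u"
  shows "side_in {l..u} x True \<longleftrightarrow> l \<le> x \<and> x < u"
    and "side_in {l..u} x False \<longleftrightarrow> l < x \<and> x \<le> u"
proof -
  show "side_in {l..u} x True \<longleftrightarrow> l \<le> x \<and> x < u"
  proof
    assume "side_in {l..u} x True"
    then obtain d where "d > 0" "{x..x+d} \<subseteq> {l..u}" unfolding side_in_def by auto
    then show "l \<le> x \<and> x < u" by auto
  next
    assume "l \<le> x \<and> x < u"
    then show "side_in {l..u} x True" unfolding side_in_def by (intro exI[of _ "u - x"]) auto
  qed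
  show "side_in {l..u} x False \<longleftrightarrow> l < x \<and> x \<le> u"
  proof
    assume "side_in {l..u} x False"
    then obtain d where "d > 0" "{x-d..x} \<subseteq> {l..u}" unfolding side_in_def by auto
    then show "l < x \<and> x \<le> u" by auto
  next
    assume "l < x \<and> x \<le> u"
    then show "side_in {l..u} x False" unfolding side_in_def by (intro exI[of _ "x - l"]) auto
  qed
qed

lemma between_sides_indicator:
  fixes p q :: "real \<times> bool" and v \<sigma> :: real
  shows "(if T \<and> (if pt_less p q then pt_le p (x, False) \<and> pt_le (x, False) q else pt_le q (x, False) \<and> pt_le (x, False) p)
            \<and> (if pt_less p q then pt_le p (x, True) \<and> pt_le (x, True) q else pt_le q (x, True) \<and> pt_le (x, True) p)
          then \<sigma> * (if pt_less p q then v else - v) else 0)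
       = (if T then \<sigma> * v * (of_bool (pt_le (x, True) q) - of_bool (pt_le (x, True) p)) else 0)"
  by (cases p; cases q) (auto simp: pt_le_def pt_less_def)

lemma V_entry_Some:
  assumes "Fpt n rho vr a p = Some q0"
  shows "V_entry n rho vr a \<beta> r p =
    (let q = canon n a q0; d = Fderiv_pt n rho vr a p; v = sgn d * \<bar>d\<bar> powr (- \<beta>)
     in (if r = q then v else 0) +
        (if fst r \<in> turning n a then (if snd r then -1 else 1) * v *
            (of_bool (pt_le (fst r, True) q) - of_bool (pt_le (fst r, True) p)) else 0))"
  unfolding V_entry_def Let_def assms option.case between_sides_indicator ..

lemma the_elem_of_rank:
  assumes prec_iff: "\<And>i j. i < N \<Longrightarrow> j < N \<Longrightarrow> prec (f i) (f j) \<longleftrightarrow> i < j" and k: "k < N"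
  shows "(THE x. x \<in> f ` {..<N} \<and> card {y \<in> f ` {..<N}. prec y x} = k) = f k"
proof -
  have inj: "inj_on f {..<N}"
    by (rule inj_onI) (metis prec_iff lessThan_iff less_irrefl nat_neq_iff)
  have rank: "card {y \<in> f ` {..<N}. prec y (f j)} = j" if "j < N" for j
  proof -
    have "{y \<in> f ` {..<N}. prec y (f j)} = f ` {..<j}"
      using that prec_iff by auto
    then show ?thesis
      using inj_on_subset[OF inj, of "{..<j}"] that by (simp add: card_image)
  qed
  show ?thesis
  proof (rule the_equality)
    show "f k \<in> f ` {..<N} \<and> card {y \<in> f ` {..<N}. prec y (f k)} = k"
      using k rank[OF k] by simp
  next
    fix x assume "x \<in> f ` {..<N} \<and> card {y \<in> f ` {..<N}. prec y x} = k"
    then show "x = f k" using rank by auto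
  qed
qed

(* The entry of V_beta, divided by the signed factor sgn F' * |F'|^(-beta), in the row of the r-th
   one-sided endpoint and the column of the c-th one, when F maps the c-th endpoint to the q-th:
   a unit at q, and +-1 at the two sides x^-, x^+ of every turning point x lying between them
   (g is the index of x^+). *)
definition transfer_coeff :: "nat \<Rightarrow> nat \<Rightarrow> nat \<Rightarrow> nat \<Rightarrow> real" where
  "transfer_coeff N r q c =
     (let g = if even r then r else r + 1
      in of_bool (r = q) +
         (if 1 \<le> r \<and> r \<le> 2*N then (if even r then -1 else 1) * (of_bool (g \<le> q) - of_bool (g \<le> c))
          else 0))"

lemma transfer_coeff_pair_sum:
  assumes "k \<le> N" "q < 2*N+2" "c < 2*N+2"
  shows "transfer_coeff N (2*k) q c + transfer_coeff N (2*k+1) q c = of_bool (c div 2 = k)"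
proof -
  have "c div 2 = k \<longleftrightarrow> 2*k \<le> c \<and> c < 2*k+2" by auto
  then show ?thesis
    using assms unfolding transfer_coeff_def Let_def by (cases "k = 0"; cases "k = N") auto
qed

lemma transfer_coeff_odd_row:
  assumes "i \<le> N"
  shows "transfer_coeff N (2*i+1) (2*N+1) (2*j+1) - transfer_coeff N (2*i+1) 0 (2*j) = 1"
    and "transfer_coeff N (2*i+1) 0 (2*j+1) - transfer_coeff N (2*i+1) (2*N+1) (2*j) = -1"
proof -
  have "(2*i+2 \<le> 2*j+1) = (2*i+2 \<le> 2*j)" by presburger
  then show "transfer_coeff N (2*i+1) (2*N+1) (2*j+1) - transfer_coeff N (2*i+1) 0 (2*j) = 1"
    and "transfer_coeff N (2*i+1) 0 (2*j+1) - transfer_coeff N (2*i+1) (2*N+1) (2*j) = -1"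
    using assms unfolding transfer_coeff_def Let_def by auto
qed

lemma bij_betw_lap_left:
  assumes h: "h \<in> {1..n+1}"
  shows "bij_betw (lap_left h) {..<n} ({1..n+1} - {h})"
proof (rule bij_betw_imageI)
  show "inj_on (lap_left h) {..<n}"
    by (rule inj_onI) (auto simp: lap_left_def split: if_splits)
  show "lap_left h ` {..<n} = {1..n+1} - {h}"
  proof (intro equalityI subsetI)
    fix s assume "s \<in> lap_left h ` {..<n}"
    then show "s \<in> {1..n+1} - {h}" by (auto simp: lap_left_def)
  next
    fix s assume s: "s \<in> {1..n+1} - {h}"
    show "s \<in> lap_left h ` {..<n}"
    proof (cases "s < h")
      case True
      then have "s = lap_left h (s - 1)" "s - 1 < n" using s h by (auto simp: lap_left_def)
      then show ?thesis by blast
    next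
      case False
      then have "s = lap_left h (s - 2)" "s - 2 < n" using s h by (auto simp: lap_left_def)
      then show ?thesis by blast
    qed
  qed
qed

lemma prod_skip_hole:
  fixes w :: "nat \<Rightarrow> 'a::comm_ring_1"
  assumes h: "h \<in> {1..n+1}"
  shows "(\<Prod>k<n+1. 1 - t * (if k + 1 = h then 0 else w (k+1))) = (\<Prod>i<n. 1 - t * w (lap_left h i))"
proof -
  define g where "g k = 1 - t * (if k = h then 0 else w k)" for k
  have "(\<Prod>k<n+1. 1 - t * (if k + 1 = h then 0 else w (k+1))) = (\<Prod>k<n+1. g (Suc k))"
    unfolding g_def Suc_eq_plus1 ..
  also have "\<dots> = prod g {Suc 0..n+1}"
    by (rule prod.atLeast1_atMost_eq[symmetric])
  also have "\<dots> = g h * prod g ({Suc 0..n+1} - {h})"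
    using h by (intro prod.remove) auto
  also have "\<dots> = (\<Prod>k\<in>{1..n+1} - {h}. 1 - t * w k)"
  proof -
    have "g h = 1" by (simp add: g_def)
    moreover have "prod g ({Suc 0..n+1} - {h}) = (\<Prod>k\<in>{1..n+1} - {h}. 1 - t * w k)"
      by (rule prod.cong) (auto simp: g_def)
    ultimately show ?thesis by simp
  qed
  also have "\<dots> = (\<Prod>i<n. 1 - t * w (lap_left h i))"
    using prod.reindex_bij_betw[OF bij_betw_lap_left[OF h], of "\<lambda>k. 1 - t * w k"] by simp
  finally show ?thesis .
qed

section \<open>Full-branch interval maps with a hole\<close>

locale ifs_with_hole =
  fixes n h :: nat and rho vr a :: "nat \<Rightarrow> real" and \<beta> :: real
  assumes a_step: "\<forall>k\<in>{1..n+1}. a k < a (k+1)"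
    and h_range: "h \<in> {1..n+1}"
    and tiling: "bij_betw (\<lambda>i. ifs rho vr i ` Ival n a) {1..n}
                   ((\<lambda>k. {a k .. a (k+1)}) ` ({1..n+1} - {h}))"
begin

abbreviation lap :: "nat \<Rightarrow> real set" where
  "lap i \<equiv> ifs rho vr i ` Ival n a"

lemma a_strict_mono: "strict_mono_on {1..n+2} a"
proof (rule strict_mono_onI)
  fix i j :: nat assume i: "i \<in> {1..n+2}" and j: "j \<in> {1..n+2}" and "i < j"
  then have "Suc i \<le> j" by simp
  then show "a i < a j" using j
  proof (induction j rule: dec_induct)
    case base then show ?case using a_step i by auto
  next
    case (step k)
    then have "a i < a k" by simp
    also have "a k < a (Suc k)" using a_step step i by auto
    finally show ?case .
  qed
qed

lemma a_less_iff: "i \<in> {1..n+2} \<Longrightarrow> j \<in> {1..n+2} \<Longrightarrow> a i < a j \<longleftrightarrow> i < j"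
  by (rule strict_mono_on_less[OF a_strict_mono])

lemma a_le_iff: "i \<in> {1..n+2} \<Longrightarrow> j \<in> {1..n+2} \<Longrightarrow> a i \<le> a j \<longleftrightarrow> i \<le> j"
  by (rule strict_mono_on_less_eq[OF a_strict_mono])

lemma a_inj_on: "inj_on a {1..n+2}"
  by (rule strict_mono_on_imp_inj_on[OF a_strict_mono])

definition lap_index :: "nat \<Rightarrow> nat" where
  "lap_index k = (THE i. i \<in> {1..n} \<and> lap i = {a k .. a (Suc k)})"

lemma lap_index_eqI:
  assumes i: "i \<in> {1..n}" and lap_i: "lap i = {a k .. a (Suc k)}"
  shows "lap_index k = i"
  unfolding lap_index_def
proof (rule the_equality)
  show "i \<in> {1..n} \<and> lap i = {a k .. a (Suc k)}" using i lap_i ..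
next
  fix j assume j: "j \<in> {1..n} \<and> lap j = {a k .. a (Suc k)}"
  show "j = i"
    by (rule inj_onD[OF bij_betw_imp_inj_on[OF tiling]]) (use i lap_i j in auto)
qed

lemma lap_image: "lap ` {1..n} = (\<lambda>k. {a k .. a (Suc k)}) ` ({1..n+1} - {h})"
  using bij_betw_imp_surj_on[OF tiling] by simp

lemma lap_index:
  assumes k: "k \<in> {1..n+1} - {h}"
  shows "lap_index k \<in> {1..n}" and "lap (lap_index k) = {a k .. a (Suc k)}"
proof -
  have "{a k .. a (Suc k)} \<in> lap ` {1..n}"
    unfolding lap_image using k by (rule imageI)
  then obtain i where i: "i \<in> {1..n}" and lap_i: "{a k .. a (Suc k)} = lap i"
    by (rule imageE)
  then show "lap_index k \<in> {1..n}" and "lap (lap_index k) = {a k .. a (Suc k)}"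
    using lap_index_eqI[OF i lap_i[symmetric]] by simp_all
qed

lemma lap_intervalE:
  assumes i: "i \<in> {1..n}"
  obtains k where "k \<in> {1..n+1} - {h}" and "lap i = {a k .. a (Suc k)}" and "lap_index k = i"
proof -
  have "lap i \<in> (\<lambda>k. {a k .. a (Suc k)}) ` ({1..n+1} - {h})"
    unfolding lap_image[symmetric] using i by (rule imageI)
  then obtain k where "k \<in> {1..n+1} - {h}" and "lap i = {a k .. a (Suc k)}"
    by (rule imageE)
  then show thesis using that lap_index_eqI[OF i] by blast
qed

lemma a_less_Suc: "k \<in> {1..n+1} \<Longrightarrow> a k < a (Suc k)"
  using a_step by simp

lemma Ival_nonempty: "Ival n a \<noteq> {}"
  using a_le_iff[of 1 "n+2"] by (simp add: Ival_def)

lemma rho_lap_index_nonzero: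
  assumes k: "k \<in> {1..n+1} - {h}"
  shows "rho (lap_index k) \<noteq> 0"
proof
  assume "rho (lap_index k) = 0"
  then have "lap (lap_index k) = (\<lambda>x. vr (lap_index k)) ` Ival n a"
    by (simp add: ifs_def)
  then have "{a k .. a (Suc k)} = {vr (lap_index k)}"
    using lap_index(2)[OF k] Ival_nonempty by (simp add: image_constant_conv)
  then have "a k = a (Suc k)" by simp
  then show False using a_less_Suc[of k] k by simp
qed

lemma lap_index_ends:
  assumes k: "k \<in> {1..n+1} - {h}" and i: "i = lap_index k"
  shows "ifs rho vr i (a 1) = (if 0 < rho i then a k else a (Suc k))"
    and "ifs rho vr i (a (n+2)) = (if 0 < rho i then a (Suc k) else a k)"
proof -
  have "lap i = (\<lambda>x. rho i * x + vr i) ` {a 1 .. a (n+2)}"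
    unfolding Ival_def ifs_def ..
  also have "\<dots> = (if 0 < rho i then {ifs rho vr i (a 1) .. ifs rho vr i (a (n+2))}
                     else {ifs rho vr i (a (n+2)) .. ifs rho vr i (a 1)})"
    using Ival_nonempty rho_lap_index_nonzero[OF k] i
    by (simp add: image_affinity_atLeastAtMost ifs_def Ival_def)
  finally have lap_i: "{a k .. a (Suc k)} = \<dots>" using lap_index(2)[OF k] i by simp
  have "a k < a (Suc k)" using a_less_Suc[of k] k by simp
  then show "ifs rho vr i (a 1) = (if 0 < rho i then a k else a (Suc k))"
    and "ifs rho vr i (a (n+2)) = (if 0 < rho i then a (Suc k) else a k)"
    using lap_i by (cases "0 < rho i"; simp add: Icc_eq_Icc)+
qed

lemma endpoint_fst: "fst (endpoint a c) = a ((c+1) div 2 + 1)"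
  by (cases "even c") (auto simp: endpoint_def elim!: evenE oddE)

lemma endpoint_snd: "snd (endpoint a c) = even c"
  by (simp add: endpoint_def)

lemma endpoint_less_iff:
  assumes i: "i < 2*n+2" and j: "j < 2*n+2"
  shows "pt_less (endpoint a i) (endpoint a j) \<longleftrightarrow> i < j"
proof -
  define I J where "I = (i+1) div 2 + 1" and "J = (j+1) div 2 + 1"
  have range: "I \<in> {1..n+2}" "J \<in> {1..n+2}" using i j by (auto simp: I_def J_def)
  have "pt_less (endpoint a i) (endpoint a j) \<longleftrightarrow> a I < a J \<or> (a I = a J \<and> odd i \<and> even j)"
    by (simp add: pt_less_def endpoint_fst endpoint_snd I_def J_def)
  also have "\<dots> \<longleftrightarrow> I < J \<or> (I = J \<and> odd i \<and> even j)"
    by (simp only: a_less_iff[OF range] inj_on_eq_iff[OF a_inj_on range])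
  also have "\<dots> \<longleftrightarrow> i < j"
    unfolding I_def J_def by (cases "even i"; cases "even j") (auto elim!: evenE oddE)
  finally show ?thesis .
qed

lemma endpoint_eq_iff:
  assumes i: "i < 2*n+2" and j: "j < 2*n+2"
  shows "endpoint a i = endpoint a j \<longleftrightarrow> i = j"
proof
  assume eq: "endpoint a i = endpoint a j"
  have irrefl: "\<not> pt_less p p" for p by (simp add: pt_less_def)
  have "\<not> i < j" using endpoint_less_iff[OF i j] irrefl eq by simp
  moreover have "\<not> j < i" using endpoint_less_iff[OF j i] irrefl eq by simp
  ultimately show "i = j" by simp
qed simp

lemma endpoint_le_iff:
  assumes i: "i < 2*n+2" and j: "j < 2*n+2"
  shows "pt_le (endpoint a i) (endpoint a j) \<longleftrightarrow> i \<le> j"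
  unfolding pt_le_def endpoint_eq_iff[OF i j] endpoint_less_iff[OF i j] by linarith

lemma side_in_interval_endpoint:
  assumes k: "k \<in> {1..n+1}" and c: "c < 2*n+2"
  shows "side_in {a k .. a (Suc k)} (fst (endpoint a c)) (snd (endpoint a c)) \<longleftrightarrow> k = c div 2 + 1"
proof -
  define s where "s = c div 2"
  have ranges: "k \<in> {1..n+2}" "Suc k \<in> {1..n+2}" "s+1 \<in> {1..n+2}" "s+2 \<in> {1..n+2}"
    using k c by (auto simp: s_def)
  have ak: "a k < a (Suc k)" using a_less_Suc k by simp
  show ?thesis
  proof (cases "even c")
    case True
    then have "endpoint a c = (a (s+1), True)" by (simp add: endpoint_def s_def)
    then have "side_in {a k .. a (Suc k)} (fst (endpoint a c)) (snd (endpoint a c))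
        \<longleftrightarrow> a k \<le> a (s+1) \<and> a (s+1) < a (Suc k)"
      using side_in_Icc(1)[OF ak] by simp
    also have "\<dots> \<longleftrightarrow> k \<le> s+1 \<and> s+1 < Suc k"
      by (simp only: a_le_iff[OF ranges(1,3)] a_less_iff[OF ranges(3,2)])
    finally show ?thesis unfolding s_def by linarith
  next
    case False
    then have "endpoint a c = (a (s+2), False)" by (simp add: endpoint_def s_def)
    then have "side_in {a k .. a (Suc k)} (fst (endpoint a c)) (snd (endpoint a c))
        \<longleftrightarrow> a k < a (s+2) \<and> a (s+2) \<le> a (Suc k)"
      using side_in_Icc(2)[OF ak] by simp
    also have "\<dots> \<longleftrightarrow> k < s+2 \<and> s+2 \<le> Suc k"
      by (simp only: a_less_iff[OF ranges(1,4)] a_le_iff[OF ranges(4,2)])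
    finally show ?thesis unfolding s_def by linarith
  qed
qed

lemma side_in_lap_endpoint:
  assumes i: "i \<in> {1..n}" and c: "c < 2*n+2"
  shows "side_in (lap i) (fst (endpoint a c)) (snd (endpoint a c)) \<longleftrightarrow>
    c div 2 + 1 \<noteq> h \<and> lap_index (c div 2 + 1) = i"
proof -
  obtain k where k: "k \<in> {1..n+1} - {h}" and lap_i: "lap i = {a k .. a (Suc k)}"
    and index_k: "lap_index k = i"
    using lap_intervalE[OF i] .
  have k1: "k \<in> {1..n+1}" using k by simp
  have "k = c div 2 + 1 \<longleftrightarrow> c div 2 + 1 \<noteq> h \<and> lap_index (c div 2 + 1) = i"
  proof
    assume "k = c div 2 + 1"
    then show "c div 2 + 1 \<noteq> h \<and> lap_index (c div 2 + 1) = i" using k index_k by simp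
  next
    assume s: "c div 2 + 1 \<noteq> h \<and> lap_index (c div 2 + 1) = i"
    then have "c div 2 + 1 \<in> {1..n+1} - {h}" using c by simp
    then have "a (c div 2 + 1) = a k"
      using lap_index(2)[of "c div 2 + 1"] lap_i s a_less_Suc[of k] k by (simp add: Icc_eq_Icc)
    then show "k = c div 2 + 1" using inj_on_eq_iff[OF a_inj_on] k c by simp
  qed
  then show ?thesis
    unfolding lap_i side_in_interval_endpoint[OF k1 c] .
qed

lemma has_lap_endpoint:
  assumes c: "c < 2*n+2"
  shows "has_lap n rho vr a (endpoint a c) \<longleftrightarrow> c div 2 + 1 \<noteq> h"
  unfolding has_lap_def using side_in_lap_endpoint[OF _ c] lap_index(1)[of "c div 2 + 1"] c by auto

lemma lap_of_endpoint:
  assumes c: "c < 2*n+2" and not_hole: "c div 2 + 1 \<noteq> h"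
  shows "lap_of n rho vr a (endpoint a c) = lap_index (c div 2 + 1)"
  unfolding lap_of_def
  using side_in_lap_endpoint[OF _ c] lap_index(1)[of "c div 2 + 1"] c not_hole
  by (intro the_equality) auto

lemma lap_index_preimage_ends:
  assumes k: "k \<in> {1..n+1} - {h}" and i: "i = lap_index k"
  shows "(a k - vr i) / rho i = (if 0 < rho i then a 1 else a (n+2))"
    and "(a (Suc k) - vr i) / rho i = (if 0 < rho i then a (n+2) else a 1)"
proof -
  have inv: "(ifs rho vr i x - vr i) / rho i = x" for x
    using rho_lap_index_nonzero[OF k] i by (simp add: ifs_def)
  show "(a k - vr i) / rho i = (if 0 < rho i then a 1 else a (n+2))"
    and "(a (Suc k) - vr i) / rho i = (if 0 < rho i then a (n+2) else a 1)"
    using lap_index_ends[OF k i] inv[of "a 1"] inv[of "a (n+2)"] by (cases "0 < rho i"; simp)+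
qed

definition image_index :: "nat \<Rightarrow> nat" where
  "image_index c = (if even c \<longleftrightarrow> 0 < rho (lap_index (c div 2 + 1)) then 0 else 2*n+1)"

lemma image_index_less: "image_index c < 2*n+2"
  by (simp add: image_index_def)

lemma Fpt_endpoint:
  assumes c: "c < 2*n+2"
  shows "Fpt n rho vr a (endpoint a c) =
    (if c div 2 + 1 = h then None else Some (endpoint a (image_index c)))"
proof (cases "c div 2 + 1 = h")
  case True
  then show ?thesis unfolding Fpt_def using has_lap_endpoint[OF c] by simp
next
  case False
  define k where "k = c div 2 + 1"
  have k: "k \<in> {1..n+1} - {h}" using False c k_def by auto
  have ends: "endpoint a 0 = (a 1, True)" "endpoint a (2*n+1) = (a (n+2), False)"
    by (simp_all add: endpoint_def)
  have "Fpt n rho vr a (endpoint a c) = Some ((fst (endpoint a c) - vr (lap_index k)) / rho (lap_index k),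
      if 0 < rho (lap_index k) then snd (endpoint a c) else \<not> snd (endpoint a c))"
    unfolding Fpt_def using has_lap_endpoint[OF c] lap_of_endpoint[OF c False] False k_def
    by (simp add: Let_def)
  also have "\<dots> = Some (endpoint a (image_index c))"
    using lap_index_preimage_ends[OF k refl] ends rho_lap_index_nonzero[OF k]
    by (cases "even c") (auto simp: endpoint_def image_index_def k_def)
  finally show ?thesis using False by simp
qed

lemma canon_endpoint: "c < 2*n+2 \<Longrightarrow> canon n a (endpoint a c) = endpoint a c"
  unfolding canon_def endpoint_fst by auto

lemma init_pts_eq: "init_pts n a = endpoint a ` {..<2*n+2}"
proof (intro equalityI subsetI)
  fix p assume "p \<in> init_pts n a"
  then consider (plus) k where "k \<in> {1..n+1}" "p = (a k, True)"
    | (minus) k where "k \<in> {2..n+2}" "p = (a k, False)"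
    unfolding init_pts_def by blast
  then show "p \<in> endpoint a ` {..<2*n+2}"
  proof cases
    case plus
    then have "p = endpoint a (2*(k-1))" "2*(k-1) < 2*n+2" by (auto simp: endpoint_def)
    then show ?thesis by blast
  next
    case minus
    then have "2 \<le> k" by simp
    then have "(2*(k-2)+1) div 2 = k - 2" "k - 2 + 2 = k" by simp_all
    then have "p = endpoint a (2*(k-2)+1)" "2*(k-2)+1 < 2*n+2" using minus by (auto simp: endpoint_def)
    then show ?thesis by blast
  qed
next
  fix p assume "p \<in> endpoint a ` {..<2*n+2}"
  then obtain c where c: "c < 2*n+2" and p: "p = endpoint a c" by auto
  show "p \<in> init_pts n a"
  proof (cases "even c")
    case True
    then have "p = (a (c div 2 + 1), True)" "c div 2 + 1 \<in> {1..n+1}"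
      using c p by (auto simp: endpoint_def)
    then show ?thesis unfolding init_pts_def by blast
  next
    case False
    then have "p = (a (c div 2 + 2), False)" "c div 2 + 2 \<in> {2..n+2}"
      using c p by (auto simp: endpoint_def)
    then show ?thesis unfolding init_pts_def by blast
  qed
qed

lemma orbit_endpoint_subset:
  assumes "p0 \<in> endpoint a ` {..<2*n+2}"
  shows "orbit n rho vr a p0 \<subseteq> endpoint a ` {..<2*n+2}"
proof
  fix p assume "p \<in> orbit n rho vr a p0"
  then have "(p0, p) \<in> (step_rel n rho vr a)\<^sup>*" unfolding orbit_def by simp
  then show "p \<in> endpoint a ` {..<2*n+2}"
  proof (induction rule: rtrancl_induct)
    case base then show ?case using assms .
  next
    case (step y z)
    obtain c where c: "c < 2*n+2" "y = endpoint a c" using step.IH by auto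
    obtain q where "Fpt n rho vr a y = Some q" "z = canon n a q"
      using step.hyps(2) unfolding step_rel_def by blast
    then have "z = endpoint a (image_index c)"
      using Fpt_endpoint[OF c(1)] c(2) canon_endpoint[OF image_index_less] by (auto split: if_splits)
    then show ?case using image_index_less by blast
  qed
qed

lemma Ypts_eq: "Ypts n rho vr a = endpoint a ` {..<2*n+2}"
proof
  show "Ypts n rho vr a \<subseteq> endpoint a ` {..<2*n+2}"
    unfolding Ypts_def init_pts_eq using orbit_endpoint_subset by blast
  show "endpoint a ` {..<2*n+2} \<subseteq> Ypts n rho vr a"
  proof
    fix p assume "p \<in> endpoint a ` {..<2*n+2}"
    moreover have "p \<in> orbit n rho vr a p" unfolding orbit_def by simp
    ultimately show "p \<in> Ypts n rho vr a" unfolding Ypts_def init_pts_eq by blast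
  qed
qed

lemma card_Ypts: "card (Ypts n rho vr a) = 2*(n+1)"
proof -
  have "inj_on (endpoint a) {..<2*n+2}" by (rule inj_onI) (simp add: endpoint_eq_iff)
  then show ?thesis by (simp add: Ypts_eq card_image)
qed

lemma nth_pt_Ypts:
  assumes "k < 2*n+2"
  shows "nth_pt (Ypts n rho vr a) k = endpoint a k"
  unfolding nth_pt_def Ypts_eq
  by (rule the_elem_of_rank[where prec = pt_less and f = "endpoint a", OF endpoint_less_iff assms])

lemma Vmat_entry_endpoints:
  assumes "r < 2*n+2" and "c < 2*n+2"
  shows "Vmat n rho vr a \<beta> $$ (r, c) = V_entry n rho vr a \<beta> (endpoint a r) (endpoint a c)"
  using assms unfolding Vmat_def Let_def card_Ypts by (simp add: nth_pt_Ypts)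

definition slope_weight :: "nat \<Rightarrow> real" where
  "slope_weight k = (let d = 1 / rho (lap_index k) in sgn d * \<bar>d\<bar> powr (- \<beta>))"

lemma abs_slope_weight:
  assumes "k \<in> {1..n+1} - {h}"
  shows "\<bar>slope_weight k\<bar> = \<bar>1 / rho (lap_index k)\<bar> powr (- \<beta>)"
    and "\<bar>slope_weight k\<bar> = (if 0 < rho (lap_index k) then slope_weight k else - slope_weight k)"
  using rho_lap_index_nonzero[OF assms]
  by (auto simp: slope_weight_def abs_mult sgn_if)

lemma Fderiv_endpoint:
  "c < 2*n+2 \<Longrightarrow> c div 2 + 1 \<noteq> h \<Longrightarrow>
    Fderiv_pt n rho vr a (endpoint a c) = 1 / rho (lap_index (c div 2 + 1))"
  by (simp add: Fderiv_pt_def lap_of_endpoint)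

lemma turning_endpoint:
  assumes r: "r < 2*n+2"
  shows "fst (endpoint a r) \<in> turning n a \<longleftrightarrow> 1 \<le> r \<and> r \<le> 2*n"
proof -
  have R: "(r+1) div 2 + 1 \<in> {1..n+2}" using r by auto
  have "fst (endpoint a r) \<in> turning n a \<longleftrightarrow> (r+1) div 2 + 1 \<in> {2..n+1}"
    unfolding turning_def endpoint_fst by (rule inj_on_image_mem_iff[OF a_inj_on R]) auto
  also have "\<dots> \<longleftrightarrow> 1 \<le> r \<and> r \<le> 2*n"
    by (cases "even r") (auto elim!: evenE oddE)
  finally show ?thesis .
qed

lemma endpoint_plus_side: "(fst (endpoint a r), True) = endpoint a (if even r then r else r + 1)"
  by (cases "even r") (auto simp: endpoint_def elim!: oddE)

lemma Vmat_index:
  assumes r: "r < 2*n+2" and c: "c < 2*n+2"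
  shows "Vmat n rho vr a \<beta> $$ (r, c) =
    (if c div 2 + 1 = h then 0 else slope_weight (c div 2 + 1) * transfer_coeff n r (image_index c) c)"
proof (cases "c div 2 + 1 = h")
  case True
  then show ?thesis
    by (simp add: Vmat_entry_endpoints[OF r c] V_entry_def Fpt_endpoint[OF c])
next
  case False
  let ?q = "image_index c" and ?g = "if even r then r else r + 1" and ?w = "slope_weight (c div 2 + 1)"
  let ?\<sigma> = "if even r then -1 else 1 :: real"
  have "Vmat n rho vr a \<beta> $$ (r, c) =
      (if endpoint a r = endpoint a ?q then ?w else 0) +
      (if fst (endpoint a r) \<in> turning n a then (if snd (endpoint a r) then -1 else 1) * ?w *
         (of_bool (pt_le (fst (endpoint a r), True) (endpoint a ?q))
          - of_bool (pt_le (fst (endpoint a r), True) (endpoint a c))) else 0)"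
    unfolding Vmat_entry_endpoints[OF r c]
    by (simp only: V_entry_Some[OF Fpt_endpoint[OF c, unfolded if_not_P[OF False]]] Let_def
        canon_endpoint[OF image_index_less] Fderiv_endpoint[OF c False] slope_weight_def)
  also have "\<dots> = ?w * of_bool (r = ?q) + (if 1 \<le> r \<and> r \<le> 2*n then
      ?w * (?\<sigma> * (of_bool (?g \<le> ?q) - of_bool (?g \<le> c))) else 0)"
  proof (cases "1 \<le> r \<and> r \<le> 2*n")
    case True
    then have g: "?g < 2*n+2" by auto
    show ?thesis
      using True unfolding turning_endpoint[OF r] endpoint_plus_side endpoint_snd
        endpoint_le_iff[OF g image_index_less] endpoint_le_iff[OF g c] endpoint_eq_iff[OF r image_index_less]
      by (simp only: if_True mult_ac of_bool_def) (cases "r = ?q"; simp)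
  next
    case False
    then show ?thesis
      using False unfolding turning_endpoint[OF r] endpoint_eq_iff[OF r image_index_less]
      by (simp only: if_False add_0_right) simp
  qed
  also have "\<dots> = ?w * transfer_coeff n r ?q c"
    unfolding transfer_coeff_def Let_def by (simp add: distrib_left)
  finally show ?thesis using False by simp
qed

lemma Vmat_carrier: "Vmat n rho vr a \<beta> \<in> carrier_mat (2*(n+1)) (2*(n+1))"
  unfolding Vmat_def Let_def card_Ypts by simp

lemma Vmat_pair_sum:
  assumes k: "k < n+1" and c: "c < 2*(n+1)"
  shows "Vmat n rho vr a \<beta> $$ (2*k, c) + Vmat n rho vr a \<beta> $$ (2*k+1, c) =
    (if c div 2 = k then (if k + 1 = h then 0 else slope_weight (k+1)) else 0)"
proof (cases "c div 2 + 1 = h")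
  case True
  then show ?thesis using k c by (auto simp: Vmat_index)
next
  case False
  have "Vmat n rho vr a \<beta> $$ (2*k, c) + Vmat n rho vr a \<beta> $$ (2*k+1, c) =
      slope_weight (c div 2 + 1) * (transfer_coeff n (2*k) (image_index c) c + transfer_coeff n (2*k+1) (image_index c) c)"
    using k c False by (simp add: Vmat_index distrib_left)
  also have "\<dots> = slope_weight (c div 2 + 1) * of_bool (c div 2 = k)"
    using transfer_coeff_pair_sum[of k n "image_index c" c] k c image_index_less[of c] by simp
  finally show ?thesis using False by auto
qed

lemma Vmat_odd_row_diff:
  assumes i: "i < n+1" and j: "j < n+1"
  shows "Vmat n rho vr a \<beta> $$ (2*i+1, 2*j+1) - Vmat n rho vr a \<beta> $$ (2*i+1, 2*j) =
    (if j + 1 = h then 0 else \<bar>slope_weight (j+1)\<bar>)"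
proof (cases "j + 1 = h")
  case True
  then show ?thesis using i j by (simp add: Vmat_index)
next
  case False
  then have k: "j + 1 \<in> {1..n+1} - {h}" using j by simp
  have q: "image_index (2*j+1) = (if 0 < rho (lap_index (j+1)) then 2*n+1 else 0)"
    "image_index (2*j) = (if 0 < rho (lap_index (j+1)) then 0 else 2*n+1)"
    by (simp_all add: image_index_def)
  show ?thesis
    using i j False q transfer_coeff_odd_row[of i n j] abs_slope_weight(2)[OF k]
    by (cases "0 < rho (lap_index (j+1))") (simp_all add: Vmat_index right_diff_distrib[symmetric])
qed

lemma part_pts_eq: "part_pts n rho vr a = a ` {1..n+2}"
proof -
  have "fst ` Ypts n rho vr a \<subseteq> a ` {1..n+2}"
  proof
    fix x assume "x \<in> fst ` Ypts n rho vr a"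
    then obtain c where "c < 2*n+2" "x = a ((c+1) div 2 + 1)"
      unfolding Ypts_eq by (auto simp: endpoint_fst)
    then show "x \<in> a ` {1..n+2}" by auto
  qed
  then show ?thesis unfolding part_pts_def by blast
qed

lemma card_part_pts: "card (part_pts n rho vr a) = n + 2"
  unfolding part_pts_eq card_image[OF a_inj_on] by simp

lemma nth_real_part_pts:
  assumes k: "k < n + 2"
  shows "nth_real (part_pts n rho vr a) k = a (k+1)"
proof -
  have "a ` {1..n+2} = (\<lambda>k. a (Suc k)) ` {..<n+2}"
    by (simp only: image_Suc_lessThan[symmetric] image_image)
  moreover have "a (Suc i) < a (Suc j) \<longleftrightarrow> i < j" if "i < n+2" "j < n+2" for i j
    using a_less_iff[of "Suc i" "Suc j"] that by simp
  ultimately show ?thesis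
    unfolding nth_real_def part_pts_eq
    using the_elem_of_rank[where prec = "(<)" and f = "\<lambda>k. a (Suc k)", OF _ k] by simp
qed

lemma F_img_hole: "F_img n rho vr a {a h <..< a (h+1)} = {}"
proof (rule equals0I)
  fix y assume "y \<in> F_img n rho vr a {a h <..< a (h+1)}"
  then obtain x i where x: "a h < x" "x < a (h+1)" and i: "i \<in> {1..n}" and x_lap: "x \<in> interior (lap i)"
    unfolding F_img_def by auto
  obtain k where k: "k \<in> {1..n+1} - {h}" and lap_i: "lap i = {a k .. a (Suc k)}" and "lap_index k = i"
    using lap_intervalE[OF i] .
  have x_k: "a k < x" "x < a (Suc k)" using x_lap unfolding lap_i by simp_all
  have ranges: "h \<in> {1..n+2}" "h + 1 \<in> {1..n+2}" "k \<in> {1..n+2}" "Suc k \<in> {1..n+2}"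
    using h_range k by auto
  show False
  proof (cases "k < h")
    case True
    then have "a (Suc k) \<le> a h" using a_le_iff[OF ranges(4,1)] by simp
    then show False using x x_k by simp
  next
    case False
    then have "h + 1 \<le> k" using k by simp
    then have "a (h+1) \<le> a k" using a_le_iff[OF ranges(2,3)] by simp
    then show False using x x_k by simp
  qed
qed

lemma F_img_lap:
  assumes k: "k \<in> {1..n+1} - {h}" and i: "i < n + 1"
  shows "{a (i+1) <..< a (i+2)} \<subseteq> F_img n rho vr a {a k <..< a (Suc k)}"
proof
  fix y assume y: "y \<in> {a (i+1) <..< a (i+2)}"
  let ?l = "lap_index k"
  have "a 1 \<le> a (i+1)" "a (i+2) \<le> a (n+2)" using a_le_iff[of 1 "i+1"] a_le_iff[of "i+2" "n+2"] i by auto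
  then have y_I: "a 1 < y" "y < a (n+2)" using y by auto
  define x where "x = ifs rho vr ?l y"
  have nz: "rho ?l \<noteq> 0" by (rule rho_lap_index_nonzero[OF k])
  have "x \<in> {a k <..< a (Suc k)}"
  proof (cases "0 < rho ?l")
    case True
    then have "ifs rho vr ?l (a 1) < x" "x < ifs rho vr ?l (a (n+2))"
      using y_I by (simp_all add: x_def ifs_def)
    then show ?thesis using lap_index_ends[OF k refl] True by simp
  next
    case False
    then have "rho ?l < 0" using nz by simp
    then have "ifs rho vr ?l (a (n+2)) < x" "x < ifs rho vr ?l (a 1)"
      using y_I by (simp_all add: x_def ifs_def mult_less_cancel_left_neg)
    then show ?thesis using lap_index_ends[OF k refl] False by simp
  qed
  moreover have "interior (lap ?l) = {a k <..< a (Suc k)}"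
    using lap_index(2)[OF k] by simp
  moreover have "y = (x - vr ?l) / rho ?l" using nz by (simp add: x_def ifs_def)
  ultimately show "y \<in> F_img n rho vr a {a k <..< a (Suc k)}"
    unfolding F_img_def using lap_index(1)[OF k] by blast
qed

lemma lap_of_set_eq:
  assumes k: "k \<in> {1..n+1} - {h}"
  shows "lap_of_set n rho vr a {a k <..< a (Suc k)} = lap_index k"
  unfolding lap_of_set_def
proof (rule the_equality)
  show "lap_index k \<in> {1..n} \<and> {a k <..< a (Suc k)} \<subseteq> lap (lap_index k)"
    using lap_index[OF k] by auto
next
  fix i assume i: "i \<in> {1..n} \<and> {a k <..< a (Suc k)} \<subseteq> lap i"
  obtain k' where k': "k' \<in> {1..n+1} - {h}" and lap_i: "lap i = {a k' .. a (Suc k')}"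
    and index_k': "lap_index k' = i"
    using lap_intervalE i by blast
  have ak: "a k < a (Suc k)" using a_less_Suc k by simp
  have "closure {a k <..< a (Suc k)} \<subseteq> closure {a k' .. a (Suc k')}"
    using i unfolding lap_i by (intro closure_mono) simp
  then have "{a k .. a (Suc k)} \<subseteq> {a k' .. a (Suc k')}" using ak by simp
  then have "a k' \<le> a k" "a (Suc k) \<le> a (Suc k')" using ak by auto
  then have "k' \<le> k" "Suc k \<le> Suc k'"
    using a_le_iff[of k' k] a_le_iff[of "Suc k" "Suc k'"] k k' by auto
  then show "i = lap_index k" using index_k' by simp
qed

lemma Qmat_index:
  assumes i: "i < n+1" and j: "j < n+1"
  shows "Qmat n rho vr a \<beta> $$ (i, j) = (if j + 1 = h then 0 else \<bar>slope_weight (j+1)\<bar>)"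
proof -
  have ends: "nth_real (part_pts n rho vr a) i = a (i+1)" "nth_real (part_pts n rho vr a) (Suc i) = a (i+2)"
    "nth_real (part_pts n rho vr a) j = a (j+1)" "nth_real (part_pts n rho vr a) (Suc j) = a (Suc (j+1))"
    using nth_real_part_pts i j by auto
  have "Qmat n rho vr a \<beta> $$ (i, j) =
      (if {a (i+1) <..< a (i+2)} \<subseteq> F_img n rho vr a {a (j+1) <..< a (Suc (j+1))} then 1 else 0)
      * \<bar>1 / rho (lap_of_set n rho vr a {a (j+1) <..< a (Suc (j+1))})\<bar> powr (- \<beta>)"
    using i j unfolding Qmat_def Let_def card_part_pts by (simp add: ends)
  also have "\<dots> = (if j + 1 = h then 0 else \<bar>slope_weight (j+1)\<bar>)"
  proof (cases "j + 1 = h")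
    case True
    have "a (i+1) < a (i+2)" using a_less_Suc[of "i+1"] i by simp
    then show ?thesis using True F_img_hole by auto
  next
    case False
    then have k: "j + 1 \<in> {1..n+1} - {h}" using j by simp
    show ?thesis
      using F_img_lap[OF k i] lap_of_set_eq[OF k] abs_slope_weight(1)[OF k] False by simp
  qed
  finally show ?thesis .
qed

lemma Qmat_eq_odd_row_diff:
  "Qmat n rho vr a \<beta> = mat (n+1) (n+1) (\<lambda>(i, j).
     Vmat n rho vr a \<beta> $$ (2*i+1, 2*j+1) - Vmat n rho vr a \<beta> $$ (2*i+1, 2*j))"
proof (rule eq_matI)
  fix i j assume "i < dim_row (mat (n+1) (n+1) (\<lambda>(i, j).
      Vmat n rho vr a \<beta> $$ (2*i+1, 2*j+1) - Vmat n rho vr a \<beta> $$ (2*i+1, 2*j)))"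
    and "j < dim_col (mat (n+1) (n+1) (\<lambda>(i, j).
      Vmat n rho vr a \<beta> $$ (2*i+1, 2*j+1) - Vmat n rho vr a \<beta> $$ (2*i+1, 2*j)))"
  then have i: "i < n+1" and j: "j < n+1" by simp_all
  have "mat (n+1) (n+1) (\<lambda>(i, j). Vmat n rho vr a \<beta> $$ (2*i+1, 2*j+1) - Vmat n rho vr a \<beta> $$ (2*i+1, 2*j))
      $$ (i, j) = Vmat n rho vr a \<beta> $$ (2*i+1, 2*j+1) - Vmat n rho vr a \<beta> $$ (2*i+1, 2*j)"
    using i j by simp
  also have "\<dots> = Qmat n rho vr a \<beta> $$ (i, j)"
    unfolding Vmat_odd_row_diff[OF i j] Qmat_index[OF i j] ..
  finally show "Qmat n rho vr a \<beta> $$ (i, j) = mat (n+1) (n+1) (\<lambda>(i, j).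
      Vmat n rho vr a \<beta> $$ (2*i+1, 2*j+1) - Vmat n rho vr a \<beta> $$ (2*i+1, 2*j)) $$ (i, j)" ..
qed (simp_all add: Qmat_def Let_def card_part_pts)

lemma Kmat_eq: "Kmat n rho vr a h \<beta> = mat n n (\<lambda>(i, j). if i = j then slope_weight (lap_left h i) else 0)"
  unfolding Kmat_def slope_weight_def lap_ifs_def lap_index_def ..

theorem det_one_minus_Vmat:
  "det (1\<^sub>m (card (Ypts n rho vr a)) - t \<cdot>\<^sub>m Vmat n rho vr a \<beta>)
   = det (1\<^sub>m (card (part_pts n rho vr a) - 1) - t \<cdot>\<^sub>m Qmat n rho vr a \<beta>)
     * det (1\<^sub>m n - t \<cdot>\<^sub>m Kmat n rho vr a h \<beta>)"
proof -
  have "det (1\<^sub>m (2*(n+1)) - t \<cdot>\<^sub>m Vmat n rho vr a \<beta>)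
      = det (1\<^sub>m (n+1) - t \<cdot>\<^sub>m Qmat n rho vr a \<beta>)
        * (\<Prod>k<n+1. 1 - t * (if k + 1 = h then 0 else slope_weight (k+1)))"
    unfolding Qmat_eq_odd_row_diff
    by (rule det_one_minus_pair_reduction[OF Vmat_carrier Vmat_pair_sum])
  also have "(\<Prod>k<n+1. 1 - t * (if k + 1 = h then 0 else slope_weight (k+1)))
      = det (1\<^sub>m n - t \<cdot>\<^sub>m Kmat n rho vr a h \<beta>)"
    unfolding Kmat_eq det_one_minus_diagonal by (rule prod_skip_hole[OF h_range])
  finally show ?thesis by (simp add: card_Ypts card_part_pts)
qed

end

theorem theorem1:
  fixes n h :: nat and rho vr a :: "nat \<Rightarrow> real" and \<beta> :: real
  assumes n_pos: "1 \<le> n"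
    and contr: "\<forall>i\<in>{1..n}. 0 < \<bar>rho i\<bar> \<and> \<bar>rho i\<bar> < 1"
    and a_mono: "\<forall>k\<in>{1..n+1}. a k < a (k+1)"
    and h_range: "h \<in> {1..n+1}"
    and tiling: "bij_betw (\<lambda>i. ifs rho vr i ` Ival n a) {1..n}
                   ((\<lambda>k. {a k .. a (k+1)}) ` ({1..n+1} - {h}))"
    and finite_orbits: "\<forall>p0\<in>init_pts n a. finite (orbit n rho vr a p0)"
  shows "\<forall>t::real.
           det (1\<^sub>m (card (Ypts n rho vr a)) - t \<cdot>\<^sub>m Vmat n rho vr a \<beta>)
         = det (1\<^sub>m (card (part_pts n rho vr a) - 1) - t \<cdot>\<^sub>m Qmat n rho vr a \<beta>)
           * det (1\<^sub>m n - t \<cdot>\<^sub>m Kmat n rho vr a h \<beta>)"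
proof -
  (* Neither 1 <= n, nor the contraction bounds, nor the finiteness of the orbits is needed:
     every branch maps onto I, so the endpoint orbits are finite anyway, and rho i \<noteq> 0
     already follows from the tiling. *)
  interpret ifs_with_hole n h rho vr a \<beta>
    using a_mono h_range tiling by unfold_locales
  show ?thesis by (intro allI det_one_minus_Vmat)
qed

end
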